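(* Let $k\ge1$ and $B>2$ be constants and let $(\alpha_L^*,\alpha_R^* )$ be the fixed point of $F$ (equivalently, the solution in $(1/2,1)^2$ of $\exp(B\sqrt k(1-2\alpha_R))=\frac{1-\alpha_L}{\alpha_L}$, $\exp(\frac{B}{\sqrt k}(1-2\alpha_L))=\frac{1-\alpha_R}{\alpha_R}$). Then $(1-\alpha_L^* )(1-\alpha_R^* )B^2<1$.
   Context: The map $F$: for $(\alpha_L,\alpha_R)\in[0,1]^2$, if $\sqrt{\alpha_L\alpha_R}\,B\le1$ set $(\theta_L,\theta_R)=(0,0)$; otherwise let $(\theta_L,\theta_R)$ be the unique solution with $\theta_L,\theta_R>0$ of $\exp(-B\sqrt k\,\alpha_R\theta_R)=1-\theta_L$ and $\exp(-\frac{B}{\sqrt k}\alpha_L\theta_L)=1-\theta_R$. Then $F(\alpha_L,\alpha_R)=\big(\tfrac12(1+\theta_L\alpha_L),\tfrac12(1+\theta_R\alpha_R)\big)$. *)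

theory Defs
  imports Complex_Main
begin

definition theta_sys :: "real \<Rightarrow> real \<Rightarrow> real \<Rightarrow> real \<Rightarrow> real \<times> real \<Rightarrow> bool" where
  "theta_sys k B aL aR t =
     (fst t > 0 \<and> snd t > 0 \<and>
      exp (- B * sqrt k * aR * snd t) = 1 - fst t \<and>
      exp (- (B / sqrt k) * aL * fst t) = 1 - snd t)"

definition thetas :: "real \<Rightarrow> real \<Rightarrow> real \<Rightarrow> real \<Rightarrow> real \<times> real" where
  "thetas k B aL aR =
     (if sqrt (aL * aR) * B \<le> 1 then (0, 0) else (THE t. theta_sys k B aL aR t))"

definition mapF :: "real \<Rightarrow> real \<Rightarrow> real \<times> real \<Rightarrow> real \<times> real" where
  "mapF k B a =
     (let aL = fst a; aR = snd a; t = thetas k B aL aR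
      in ((1 + fst t * aL) / 2, (1 + snd t * aR) / 2))"

end

theory Submission
  imports Defs
begin

text \<open>
  The fixed-point equation reads \<open>\<theta>\<^sub>L \<alpha>\<^sub>L = 2\<alpha>\<^sub>L - 1\<close>, \<open>\<theta>\<^sub>R \<alpha>\<^sub>R = 2\<alpha>\<^sub>R - 1\<close>, which turns the
  system for \<open>\<theta>\<close> into \<open>B\<surd>k (2\<alpha>\<^sub>R - 1) = ln (\<alpha>\<^sub>L / (1 - \<alpha>\<^sub>L))\<close> and
  \<open>B/\<surd>k (2\<alpha>\<^sub>L - 1) = ln (\<alpha>\<^sub>R / (1 - \<alpha>\<^sub>R))\<close>. Since \<open>ln z < z - 1\<close> for \<open>z = \<alpha>/(1 - \<alpha>) \<noteq> 1\<close>,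
  each logarithm is less than \<open>(2\<alpha> - 1)/(1 - \<alpha>)\<close>; multiplying the two bounds, the factors
  \<open>2\<alpha> - 1\<close> cancel and \<open>B\<^sup>2 (1 - \<alpha>\<^sub>L)(1 - \<alpha>\<^sub>R) < 1\<close> remains.
  This needs the fixed point to lie above the threshold (otherwise it is \<open>(1/2, 1/2)\<close>,
  contradicting \<open>B > 2\<close>) and the system \<open>exp (-p s\<^sub>2) = 1 - s\<^sub>1\<close>, \<open>exp (-q s\<^sub>1) = 1 - s\<^sub>2\<close>
  to have exactly one positive solution when \<open>pq > 1\<close>: existence by the intermediate value
  theorem, uniqueness because every solution satisfies \<open>pq \<phi>(p s\<^sub>2) \<phi>(q s\<^sub>1) = 1\<close> with
  \<open>\<phi>(u) = (1 - exp (-u))/u\<close> (\<open>decay_ratio\<close> below) strictly decreasing.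
\<close>

lemma exp_gt_add_one:
  assumes "(u::real) \<noteq> 0"
  shows "1 + u < exp u"
proof -
  have "exp u \<noteq> 1 + u"
  proof
    assume "exp u = 1 + u"
    then have "ln (exp u) = exp u - 1" unfolding ln_exp by linarith
    then have "exp u = 1" by (rule ln_eq_minus_one[OF exp_gt_zero])
    then show False using assms by simp
  qed
  then show ?thesis using exp_ge_add_one_self[of u] by linarith
qed

lemma ln_less_minus_one: "0 < (x::real) \<Longrightarrow> x \<noteq> 1 \<Longrightarrow> ln x < x - 1"
  using ln_le_minus_one ln_eq_minus_one by fastforce

definition decay_ratio :: "real \<Rightarrow> real" where
  "decay_ratio u = (1 - exp (- u)) / u"

lemma decay_ratio_pos: "u > 0 \<Longrightarrow> decay_ratio u > 0"
  unfolding decay_ratio_def by simp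

lemma one_minus_exp_eq_decay_ratio: "u > 0 \<Longrightarrow> 1 - exp (- u) = u * decay_ratio u"
  unfolding decay_ratio_def by simp

lemma decay_ratio_strict_antimono:
  fixes a b :: real
  assumes "0 < a" "a < b"
  shows "decay_ratio b < decay_ratio a"
proof (rule DERIV_neg_imp_decreasing[OF assms(2)])
  fix x assume "a \<le> x" "x \<le> b"
  with assms have x: "x > 0" by simp
  have "(decay_ratio has_real_derivative (exp (- x) * x - (1 - exp (- x))) / x\<^sup>2) (at x)"
    unfolding decay_ratio_def using x by (auto intro!: derivative_eq_intros simp: power2_eq_square)
  moreover have "exp (- x) * (1 + x) < exp (- x) * exp x"
    using exp_gt_add_one[of x] x by simp
  then have "(exp (- x) * x - (1 - exp (- x))) / x\<^sup>2 < 0"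
    using x by (simp add: divide_neg_pos algebra_simps flip: exp_add)
  ultimately show "\<exists>y. (decay_ratio has_real_derivative y) (at x) \<and> y < 0" by blast
qed

lemma coupled_exp_system_product:
  fixes p q s\<^sub>1 s\<^sub>2 :: real
  assumes "p > 0" "q > 0" "s\<^sub>1 > 0" "s\<^sub>2 > 0"
    and "exp (- p * s\<^sub>2) = 1 - s\<^sub>1" "exp (- q * s\<^sub>1) = 1 - s\<^sub>2"
  shows "p * q * decay_ratio (p * s\<^sub>2) * decay_ratio (q * s\<^sub>1) = 1"
proof -
  have "1 - exp (- (p * s\<^sub>2)) = s\<^sub>1" "1 - exp (- (q * s\<^sub>1)) = s\<^sub>2"
    using assms(5,6) by simp_all
  then have "s\<^sub>1 = p * s\<^sub>2 * decay_ratio (p * s\<^sub>2)" "s\<^sub>2 = q * s\<^sub>1 * decay_ratio (q * s\<^sub>1)"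
    using one_minus_exp_eq_decay_ratio assms(1-4) by (metis mult_pos_pos)+
  then have "s\<^sub>1 = (p * q * decay_ratio (p * s\<^sub>2) * decay_ratio (q * s\<^sub>1)) * s\<^sub>1"
    by (simp add: algebra_simps)
  then show ?thesis using \<open>s\<^sub>1 > 0\<close> by simp
qed

lemma coupled_exp_system_unique:
  fixes p q s\<^sub>1 s\<^sub>2 t\<^sub>1 t\<^sub>2 :: real
  assumes pq: "p > 0" "q > 0"
    and s: "s\<^sub>1 > 0" "s\<^sub>2 > 0" "exp (- p * s\<^sub>2) = 1 - s\<^sub>1" "exp (- q * s\<^sub>1) = 1 - s\<^sub>2"
    and t: "t\<^sub>1 > 0" "t\<^sub>2 > 0" "exp (- p * t\<^sub>2) = 1 - t\<^sub>1" "exp (- q * t\<^sub>1) = 1 - t\<^sub>2"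
  shows "s\<^sub>1 = t\<^sub>1 \<and> s\<^sub>2 = t\<^sub>2"
proof -
  have no_smaller: "\<not> u\<^sub>1 < v\<^sub>1"
    if u: "u\<^sub>1 > 0" "u\<^sub>2 > 0" "exp (- p * u\<^sub>2) = 1 - u\<^sub>1" "exp (- q * u\<^sub>1) = 1 - u\<^sub>2"
      and v: "v\<^sub>1 > 0" "v\<^sub>2 > 0" "exp (- p * v\<^sub>2) = 1 - v\<^sub>1" "exp (- q * v\<^sub>1) = 1 - v\<^sub>2"
    for u\<^sub>1 u\<^sub>2 v\<^sub>1 v\<^sub>2
  proof
    assume lt\<^sub>1: "u\<^sub>1 < v\<^sub>1"
    then have "exp (- q * v\<^sub>1) < exp (- q * u\<^sub>1)" using pq by simp
    then have lt\<^sub>2: "u\<^sub>2 < v\<^sub>2" using u v by linarith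
    have "decay_ratio (p * v\<^sub>2) * decay_ratio (q * v\<^sub>1)
          < decay_ratio (p * u\<^sub>2) * decay_ratio (q * u\<^sub>1)"
    proof (rule mult_strict_mono)
      show "decay_ratio (p * v\<^sub>2) < decay_ratio (p * u\<^sub>2)"
        using lt\<^sub>2 u v pq by (intro decay_ratio_strict_antimono) auto
      show "decay_ratio (q * v\<^sub>1) < decay_ratio (q * u\<^sub>1)"
        using lt\<^sub>1 u v pq by (intro decay_ratio_strict_antimono) auto
    qed (use u v pq decay_ratio_pos[of "p * u\<^sub>2"] decay_ratio_pos[of "q * v\<^sub>1"] in auto)
    then have "p * q * decay_ratio (p * v\<^sub>2) * decay_ratio (q * v\<^sub>1)
             < p * q * decay_ratio (p * u\<^sub>2) * decay_ratio (q * u\<^sub>1)"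
      using pq by (simp add: mult.assoc)
    then show False
      using coupled_exp_system_product[OF pq u] coupled_exp_system_product[OF pq v] by simp
  qed
  have "s\<^sub>1 = t\<^sub>1" using no_smaller[OF s t] no_smaller[OF t s] by simp
  then show ?thesis using s t by simp
qed

text \<open>
  Eliminating \<open>s\<^sub>2\<close> leaves the equation \<open>G s\<^sub>1 = 0\<close>; \<open>G\<close> vanishes at \<open>0\<close> with slope
  \<open>pq - 1 > 0\<close> there and is negative at \<open>1\<close>.
\<close>

lemma coupled_exp_system_solvable:
  fixes p q :: real
  assumes "p > 0" "q > 0" "p * q > 1"
  shows "\<exists>s\<^sub>1 s\<^sub>2. s\<^sub>1 > 0 \<and> s\<^sub>2 > 0 \<and> exp (- p * s\<^sub>2) = 1 - s\<^sub>1 \<and> exp (- q * s\<^sub>1) = 1 - s\<^sub>2"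
proof -
  define G where "G s = 1 - exp (- p * (1 - exp (- q * s))) - s" for s
  have "(G has_real_derivative p * q - 1) (at 0)"
    unfolding G_def by (auto intro!: derivative_eq_intros)
  then obtain d where "d > 0" and d: "\<And>h. 0 < h \<Longrightarrow> h < d \<Longrightarrow> G 0 < G (0 + h)"
    using DERIV_pos_inc_right assms(3) by (metis diff_gt_0_iff_gt)
  define h where "h = min (d / 2) (1 / 2)"
  have h: "0 < h" "h < d" "h \<le> 1" using \<open>d > 0\<close> by (auto simp: h_def)
  have "G h > 0" using d[OF h(1,2)] by (simp add: G_def)
  moreover have "G 1 < 0" by (simp add: G_def)
  moreover have "continuous_on {h..1} G" unfolding G_def by (intro continuous_intros)
  ultimately obtain s where s: "h \<le> s" "s \<le> 1" "G s = 0"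
    using IVT2'[of G 1 0 h] h by force
  then show ?thesis
    using h assms by (intro exI[of _ s] exI[of _ "1 - exp (- q * s)"]) (auto simp: G_def)
qed

lemma thetas_solves_theta_sys:
  assumes "k > 0" "B > 0" "aL \<ge> 0" "aR \<ge> 0" and above: "sqrt (aL * aR) * B > 1"
  shows "theta_sys k B aL aR (thetas k B aL aR)"
proof -
  define p where "p = B * sqrt k * aR"
  define q where "q = B / sqrt k * aL"
  have "sqrt (aL * aR) > 0"
  proof (rule ccontr)
    assume "\<not> sqrt (aL * aR) > 0"
    then have "sqrt (aL * aR) * B \<le> 0" using \<open>B > 0\<close> by (simp add: mult_nonpos_nonneg)
    with above show False by linarith
  qed
  then have "aL \<noteq> 0" "aR \<noteq> 0" by auto
  then have "p > 0" "q > 0" using assms(1-4) by (simp_all add: p_def q_def)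
  have "p * q = (sqrt (aL * aR) * B)\<^sup>2"
    using assms(1,3,4) by (simp add: p_def q_def power_mult_distrib power2_eq_square)
  then have "p * q > 1" using one_less_power[OF above, of 2] by simp
  have sys: "theta_sys k B aL aR s \<longleftrightarrow>
      fst s > 0 \<and> snd s > 0 \<and> exp (- p * snd s) = 1 - fst s \<and> exp (- q * fst s) = 1 - snd s"
    for s unfolding theta_sys_def p_def q_def by simp
  obtain s\<^sub>1 s\<^sub>2 where s: "s\<^sub>1 > 0" "s\<^sub>2 > 0" "exp (- p * s\<^sub>2) = 1 - s\<^sub>1" "exp (- q * s\<^sub>1) = 1 - s\<^sub>2"
    using coupled_exp_system_solvable[OF \<open>p > 0\<close> \<open>q > 0\<close> \<open>p * q > 1\<close>] by blast
  have "\<exists>!s. theta_sys k B aL aR s"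
  proof (rule ex1I[of _ "(s\<^sub>1, s\<^sub>2)"])
    show "theta_sys k B aL aR (s\<^sub>1, s\<^sub>2)" unfolding sys using s by simp
    fix t assume "theta_sys k B aL aR t"
    then show "t = (s\<^sub>1, s\<^sub>2)"
      unfolding sys using coupled_exp_system_unique[OF \<open>p > 0\<close> \<open>q > 0\<close> s] prod.expand by auto
  qed
  then show ?thesis unfolding thetas_def using above by (simp add: theI')
qed

lemma fixed_coordinate_logit:
  fixes a \<theta> u :: real
  assumes fixed: "\<theta> * a = 2 * a - 1" and "\<theta> > 0" and u: "exp (- u) = 1 - \<theta>"
  shows "1/2 < a" "a < 1" "u = ln (a / (1 - a))"
proof -
  have "\<theta> < 1" using u exp_gt_zero[of "- u"] by linarith
  have "a * (2 - \<theta>) = 1" using fixed by (simp add: algebra_simps)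
  then have a: "a = 1 / (2 - \<theta>)" using \<open>\<theta> < 1\<close> by (simp add: eq_divide_eq)
  show "1/2 < a" "a < 1" unfolding a using \<open>\<theta> > 0\<close> \<open>\<theta> < 1\<close> by (simp_all add: field_simps)
  have "1 - \<theta> = (1 - a) / a" unfolding a using \<open>\<theta> < 1\<close> by (simp add: field_simps)
  then show "u = ln (a / (1 - a))"
    using u \<open>a < 1\<close> \<open>1/2 < a\<close> by (metis ln_exp ln_inverse inverse_divide minus_minus)
qed

lemma logit_less: "1/2 < (a::real) \<Longrightarrow> a < 1 \<Longrightarrow> ln (a / (1 - a)) < (2 * a - 1) / (1 - a)"
  using ln_less_minus_one[of "a / (1 - a)"] by (simp add: field_simps)

lemma logit_coupling_bound:
  fixes a b c d :: real
  assumes "c > 0" "d > 0" "1/2 < a" "a < 1" "1/2 < b" "b < 1"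
    and "c * (2 * b - 1) = ln (a / (1 - a))" "d * (2 * a - 1) = ln (b / (1 - b))"
  shows "c * d * (1 - a) * (1 - b) < 1"
proof -
  have "c * (2 * b - 1) < (2 * a - 1) / (1 - a)" "d * (2 * a - 1) < (2 * b - 1) / (1 - b)"
    using logit_less[of a] logit_less[of b] assms by simp_all
  then have "c * (2 * b - 1) * (1 - a) < 2 * a - 1" "d * (2 * a - 1) * (1 - b) < 2 * b - 1"
    using assms by (simp_all add: pos_less_divide_eq)
  then have "(c * (2 * b - 1) * (1 - a)) * (d * (2 * a - 1) * (1 - b)) < (2 * a - 1) * (2 * b - 1)"
    using assms by (intro mult_strict_mono) auto
  then have "(c * d * (1 - a) * (1 - b)) * ((2 * a - 1) * (2 * b - 1)) < 1 * ((2 * a - 1) * (2 * b - 1))"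
    by (simp add: ac_simps)
  moreover have "(2 * a - 1) * (2 * b - 1) > 0" using assms by simp
  ultimately show ?thesis by (simp only: mult_less_cancel_right_pos)
qed

lemma mapF_fixed_point_eqs:
  assumes "mapF k B (aL, aR) = (aL, aR)" "thetas k B aL aR = (\<theta>L, \<theta>R)"
  shows "\<theta>L * aL = 2 * aL - 1" "\<theta>R * aR = 2 * aR - 1"
proof -
  have "(1 + \<theta>L * aL) / 2 = aL" "(1 + \<theta>R * aR) / 2 = aR"
    using assms by (simp_all add: mapF_def)
  then show "\<theta>L * aL = 2 * aL - 1" "\<theta>R * aR = 2 * aR - 1"
    by (simp_all add: field_simps)
qed

lemma mapF_fixed_point_above_threshold:
  assumes "B > 2" "mapF k B (aL, aR) = (aL, aR)"
  shows "sqrt (aL * aR) * B > 1"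
proof (rule ccontr)
  assume below: "\<not> ?thesis"
  then have "thetas k B aL aR = (0, 0)" by (simp add: thetas_def)
  then have half: "aL = 1/2" "aR = 1/2"
    using mapF_fixed_point_eqs[OF assms(2)] by simp_all
  have sqrt_half: "sqrt (aL * aR) = 1/2" unfolding half by (simp add: real_sqrt_divide)
  have "B / 2 \<le> 1" using below unfolding sqrt_half by simp
  then show False using assms(1) by simp
qed

theorem mainTheorem15:
  fixes k B aL aR :: real
  assumes "k \<ge> 1" and "B > 2"
    and "aL \<in> {0..1}" and "aR \<in> {0..1}"
    and "mapF k B (aL, aR) = (aL, aR)"
  shows "(1 - aL) * (1 - aR) * B\<^sup>2 < 1"
proof -
  obtain \<theta>L \<theta>R where \<theta>: "thetas k B aL aR = (\<theta>L, \<theta>R)" by (cases "thetas k B aL aR")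
  note fixed = mapF_fixed_point_eqs[OF assms(5) \<theta>]
  have "theta_sys k B aL aR (\<theta>L, \<theta>R)"
    using thetas_solves_theta_sys[of k B aL aR] mapF_fixed_point_above_threshold[OF assms(2,5)]
      assms(1-4) \<theta> by simp
  then have "\<theta>L > 0" "\<theta>R > 0"
    and "exp (- (B * sqrt k * (2 * aR - 1))) = 1 - \<theta>L"
    and "exp (- (B / sqrt k * (2 * aL - 1))) = 1 - \<theta>R"
    unfolding theta_sys_def fixed[symmetric] by (simp_all add: ac_simps)
  note L = fixed_coordinate_logit[OF fixed(1) \<open>\<theta>L > 0\<close> this(3)]
    and R = fixed_coordinate_logit[OF fixed(2) \<open>\<theta>R > 0\<close> this(4)]
  have "B * sqrt k * (B / sqrt k) * (1 - aL) * (1 - aR) < 1"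
    by (rule logit_coupling_bound) (use assms(1,2) L R in auto)
  moreover have "B * sqrt k * (B / sqrt k) = B\<^sup>2"
    using assms(1) by (simp add: power2_eq_square)
  ultimately show ?thesis by (simp add: ac_simps)
qed

end
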